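(* Let $K$ be a subfield of $\mathbb{R}$, let $A$ be a commutative $K$-algebra (with $1$) and let $T\subseteq A$ be a preordering of $A$. Suppose that $A$ (equipped with $T$) is f.f., almost archimedean and reduced (i.e. $A$ has no nonzero nilpotent elements). Then $A$ is the directed union $A=\bigcup B$ of its finitely generated $K$-subalgebras $B$ that are almost archimedean when equipped with the preordering $T\cap B$. More precisely, every finite subset of $A$ is contained in such a subalgebra $B$, and any two such subalgebras are contained in a third one.
   Context: A preordering of a commutative ring $A$ is a subset $T\subseteq A$ with $T+T\subseteq T$, $TT\subseteq T$ and $a^2\in T$ for all $a\in A$. If $B\subseteq A$ is a subring, $B$ is equipped with the preordering $T\cap B$. An ordering of a ring $A$ is a subset $P\subseteq A$ with $P+P\subseteq P$, $PP\subseteq P$, $P\cup -P=A$ and $P\cap -P$ a prime ideal of $A$. For a ring $A$ with preordering $T$, $\operatorname{sper} A$ denotes the set of orderings $P$ of $A$ with $T\subseteq P$. An ordering $P$ is archimedean if for every $a\in A$ there is $N\in\mathbb{N}$ with $N-a\in P$. The preordered ring $A$ is called almost archimedean if every $P\in\operatorname{sper}A$ for which $P\cap -P$ is a minimal prime ideal of $A$ is archimedean. The $K$-algebra $A$ is called f.f. if $A$ has only finitely many minimal prime ideals and, for each minimal prime ideal $\mathfrak{p}$ of $A$, the quotient field $\operatorname{qf}(A/\mathfrak{p})$ is a finitely generated field extension of $K$. "f.g." means finitely generated as a $K$-algebra. *)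

theory Defs
  imports "HOL-Algebra.Generated_Fields"
begin

text \<open>The commutative ring A is the whole type 'a (class comm_ring_1).
 K is a subfield of the reals given as a set; the K-algebra structure is a map
 iota : real => 'a which is a unital ring homomorphism on K.\<close>

definition subfield_of_reals :: "real set \<Rightarrow> bool" where
  "subfield_of_reals K \<longleftrightarrow> 0 \<in> K \<and> 1 \<in> K \<and>
     (\<forall>x\<in>K. \<forall>y\<in>K. x + y \<in> K \<and> x * y \<in> K) \<and>
     (\<forall>x\<in>K. - x \<in> K) \<and> (\<forall>x\<in>K. x \<noteq> 0 \<longrightarrow> inverse x \<in> K)"

definition K_algebra_map :: "real set \<Rightarrow> (real \<Rightarrow> 'a::comm_ring_1) \<Rightarrow> bool" where
  "K_algebra_map K iota \<longleftrightarrow> iota 1 = 1 \<and>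
     (\<forall>x\<in>K. \<forall>y\<in>K. iota (x + y) = iota x + iota y \<and> iota (x * y) = iota x * iota y)"

definition preordering :: "'a::comm_ring_1 set \<Rightarrow> bool" where
  "preordering T \<longleftrightarrow> (\<forall>x\<in>T. \<forall>y\<in>T. x + y \<in> T \<and> x * y \<in> T) \<and> (\<forall>a. a\<^sup>2 \<in> T)"

definition subring_of :: "'a::comm_ring_1 set \<Rightarrow> bool" where
  "subring_of B \<longleftrightarrow> 1 \<in> B \<and> (\<forall>x\<in>B. \<forall>y\<in>B. x + y \<in> B \<and> x * y \<in> B) \<and> (\<forall>x\<in>B. - x \<in> B)"

definition prime_ideal_in :: "'a::comm_ring_1 set \<Rightarrow> 'a set \<Rightarrow> bool" where
  "prime_ideal_in B I \<longleftrightarrow> I \<subseteq> B \<and> 0 \<in> I \<and> (\<forall>x\<in>I. \<forall>y\<in>I. x + y \<in> I) \<and>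
     (\<forall>b\<in>B. \<forall>x\<in>I. b * x \<in> I) \<and> I \<noteq> B \<and>
     (\<forall>a\<in>B. \<forall>b\<in>B. a * b \<in> I \<longrightarrow> a \<in> I \<or> b \<in> I)"

definition minimal_prime_in :: "'a::comm_ring_1 set \<Rightarrow> 'a set \<Rightarrow> bool" where
  "minimal_prime_in B I \<longleftrightarrow> prime_ideal_in B I \<and>
     (\<forall>J. prime_ideal_in B J \<and> J \<subseteq> I \<longrightarrow> J = I)"

definition ordering_of :: "'a::comm_ring_1 set \<Rightarrow> 'a set \<Rightarrow> bool" where
  "ordering_of B P \<longleftrightarrow> P \<subseteq> B \<and> (\<forall>x\<in>P. \<forall>y\<in>P. x + y \<in> P \<and> x * y \<in> P) \<and>
     P \<union> uminus ` P = B \<and> prime_ideal_in B (P \<inter> uminus ` P)"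

definition sper :: "'a::comm_ring_1 set \<Rightarrow> 'a set \<Rightarrow> 'a set set" where
  "sper B T = {P. ordering_of B P \<and> T \<subseteq> P}"

definition archimedean_ordering :: "'a::comm_ring_1 set \<Rightarrow> 'a set \<Rightarrow> bool" where
  "archimedean_ordering B P \<longleftrightarrow> (\<forall>a\<in>B. \<exists>N::nat. of_nat N - a \<in> P)"

definition almost_archimedean :: "'a::comm_ring_1 set \<Rightarrow> 'a set \<Rightarrow> bool" where
  "almost_archimedean B T \<longleftrightarrow>
     (\<forall>P\<in>sper B T. minimal_prime_in B (P \<inter> uminus ` P) \<longrightarrow> archimedean_ordering B P)"

definition K_subalgebra :: "real set \<Rightarrow> (real \<Rightarrow> 'a::comm_ring_1) \<Rightarrow> 'a set \<Rightarrow> bool" where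
  "K_subalgebra K iota B \<longleftrightarrow> subring_of B \<and> iota ` K \<subseteq> B"

definition K_subalg_gen :: "real set \<Rightarrow> (real \<Rightarrow> 'a::comm_ring_1) \<Rightarrow> 'a set \<Rightarrow> 'a set" where
  "K_subalg_gen K iota S = \<Inter> {B. K_subalgebra K iota B \<and> S \<subseteq> B}"

definition fg_K_subalgebra :: "real set \<Rightarrow> (real \<Rightarrow> 'a::comm_ring_1) \<Rightarrow> 'a set \<Rightarrow> bool" where
  "fg_K_subalgebra K iota B \<longleftrightarrow> (\<exists>S. finite S \<and> B = K_subalg_gen K iota S)"

definition reduced :: "'a::comm_ring_1 itself \<Rightarrow> bool" where
  "reduced _ \<longleftrightarrow> (\<forall>(x::'a) (n::nat). x ^ n = 0 \<longrightarrow> x = 0)"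

text \<open>The quotient field qf(A/p) of A/p for a prime ideal p of A, built as
 equivalence classes of fractions (a,b) with b not in p.\<close>
definition frac_rel :: "'a::comm_ring_1 set \<Rightarrow> (('a \<times> 'a) \<times> ('a \<times> 'a)) set" where
  "frac_rel p = {((a,b),(c,d)). b \<notin> p \<and> d \<notin> p \<and> a * d - b * c \<in> p}"

definition frac :: "'a::comm_ring_1 set \<Rightarrow> 'a \<Rightarrow> 'a \<Rightarrow> ('a \<times> 'a) set" where
  "frac p a b = frac_rel p `` {(a, b)}"

definition frac_num :: "('a \<times> 'a) set \<Rightarrow> 'a" where
  "frac_num X = fst (SOME x. x \<in> X)"

definition frac_den :: "('a \<times> 'a) set \<Rightarrow> 'a" where
  "frac_den X = snd (SOME x. x \<in> X)"

definition qf_ring :: "'a::comm_ring_1 set \<Rightarrow> ('a \<times> 'a) set ring" where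
  "qf_ring p = \<lparr> carrier = (UNIV \<times> (- p)) // frac_rel p,
     monoid.mult = (\<lambda>X Y. frac p (frac_num X * frac_num Y) (frac_den X * frac_den Y)),
     one = frac p 1 1,
     zero = frac p 0 1,
     add = (\<lambda>X Y. frac p (frac_num X * frac_den Y + frac_num Y * frac_den X)
                         (frac_den X * frac_den Y)) \<rparr>"

definition fg_field_ext :: "real set \<Rightarrow> (real \<Rightarrow> 'a::comm_ring_1) \<Rightarrow> 'a set \<Rightarrow> bool" where
  "fg_field_ext K iota p \<longleftrightarrow> (\<exists>S. finite S \<and> S \<subseteq> carrier (qf_ring p) \<and>
     generate_field (qf_ring p) ((\<lambda>k. frac p (iota k) 1) ` K \<union> S) = carrier (qf_ring p))"

definition ff_algebra :: "real set \<Rightarrow> (real \<Rightarrow> 'a::comm_ring_1) \<Rightarrow> bool" where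
  "ff_algebra K iota \<longleftrightarrow> finite {p::'a set. minimal_prime_in UNIV p} \<and>
     (\<forall>p. minimal_prime_in UNIV p \<longrightarrow> fg_field_ext K iota p)"

end

theory Submission
  imports Defs
begin

text \<open>Since A is reduced, its finitely many minimal primes p intersect in 0. Choose
  finitely many elements whose classes generate every qf(A/p) over K and, for each p, an
  element e lying in all minimal primes except p; let B be the subalgebra generated by these
  and the given finite set. If a d - n \<in> p with n, d \<in> B and d \<notin> p, then
  e (a d - n) lies in every minimal prime, hence vanishes, so a (e d) \<in> B: A lies in the
  localization of B at B - p. Every minimal prime of B is the contraction p \<inter> B of a
  minimal prime of A, and an ordering P of B with support p \<inter> B extends to the ordering
  {a. a d^2 \<in> P for a denominator d of a} of A with support p. That ordering contains T,
  hence is archimedean, and it restricts to P on B.\<close>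

section \<open>Ideals and subrings\<close>

definition is_ideal :: "'a::comm_ring_1 set \<Rightarrow> bool" where
  "is_ideal I \<longleftrightarrow> 0 \<in> I \<and> (\<forall>x\<in>I. \<forall>y\<in>I. x + y \<in> I) \<and> (\<forall>b. \<forall>x\<in>I. b * x \<in> I)"

lemma is_idealD:
  assumes "is_ideal I"
  shows is_ideal_zero: "0 \<in> I"
    and is_ideal_add: "x \<in> I \<Longrightarrow> y \<in> I \<Longrightarrow> x + y \<in> I"
    and is_ideal_mult_left: "x \<in> I \<Longrightarrow> b * x \<in> I"
    and is_ideal_mult_right: "x \<in> I \<Longrightarrow> x * b \<in> I"
  using assms by (auto simp: is_ideal_def mult.commute[of x b])

lemma prime_ideal_in_one_notin: "prime_ideal_in B I \<Longrightarrow> 1 \<notin> I"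
  unfolding prime_ideal_in_def by (metis mult.right_neutral subsetI subset_antisym)

lemma prime_ideal_in_UNIV_iff:
  "prime_ideal_in UNIV p \<longleftrightarrow> is_ideal p \<and> 1 \<notin> p \<and> (\<forall>a b. a * b \<in> p \<longrightarrow> a \<in> p \<or> b \<in> p)"
proof
  assume p: "prime_ideal_in UNIV p"
  then show "is_ideal p \<and> 1 \<notin> p \<and> (\<forall>a b. a * b \<in> p \<longrightarrow> a \<in> p \<or> b \<in> p)"
    using prime_ideal_in_one_notin[OF p] by (auto simp: prime_ideal_in_def is_ideal_def)
next
  assume "is_ideal p \<and> 1 \<notin> p \<and> (\<forall>a b. a * b \<in> p \<longrightarrow> a \<in> p \<or> b \<in> p)"
  then show "prime_ideal_in UNIV p" by (auto simp: prime_ideal_in_def is_ideal_def)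
qed

lemma prime_ideal_UNIV:
  assumes "prime_ideal_in UNIV p"
  shows prime_ideal_UNIV_is_ideal: "is_ideal p"
    and prime_ideal_UNIV_one: "1 \<notin> p"
    and prime_ideal_UNIV_mult_notin: "a \<notin> p \<Longrightarrow> b \<notin> p \<Longrightarrow> a * b \<notin> p"
  using assms by (auto simp: prime_ideal_in_UNIV_iff)

lemma minimal_prime_in_prime: "minimal_prime_in B p \<Longrightarrow> prime_ideal_in B p"
  by (simp add: minimal_prime_in_def)

lemma minimal_prime_UNIV_is_ideal: "minimal_prime_in UNIV p \<Longrightarrow> is_ideal p"
  by (simp add: minimal_prime_in_def prime_ideal_UNIV_is_ideal)

lemma prime_ideal_UNIV_mult_iff:
  assumes "prime_ideal_in UNIV p" and "d \<notin> p"
  shows "a * d \<in> p \<longleftrightarrow> a \<in> p"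
  using assms is_ideal_mult_right[OF prime_ideal_UNIV_is_ideal[OF assms(1)]]
  by (auto simp: prime_ideal_in_UNIV_iff)

lemma subring_ofD:
  assumes "subring_of B"
  shows subring_of_one: "1 \<in> B"
    and subring_of_add: "x \<in> B \<Longrightarrow> y \<in> B \<Longrightarrow> x + y \<in> B"
    and subring_of_mult: "x \<in> B \<Longrightarrow> y \<in> B \<Longrightarrow> x * y \<in> B"
    and subring_of_uminus: "x \<in> B \<Longrightarrow> - x \<in> B"
  using assms by (auto simp: subring_of_def)

lemma subring_of_diff: "subring_of B \<Longrightarrow> x \<in> B \<Longrightarrow> y \<in> B \<Longrightarrow> x - y \<in> B"
  using subring_of_add subring_of_uminus by (metis diff_conv_add_uminus)

lemma subring_of_of_nat: "subring_of B \<Longrightarrow> of_nat n \<in> B"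
  by (induction n) (use subring_of_diff subring_of_one subring_of_add in force)+

lemma subring_of_UNIV: "subring_of UNIV"
  by (simp add: subring_of_def)

lemma prime_ideal_in_Int_subring:
  assumes "prime_ideal_in UNIV p" and "subring_of B"
  shows "prime_ideal_in B (p \<inter> B)"
  using assms prime_ideal_in_one_notin[OF assms(1)] subring_of_one[OF assms(2)]
    subring_of_diff[OF assms(2) subring_of_one[OF assms(2)] subring_of_one[OF assms(2)]]
  by (auto simp: prime_ideal_in_def subring_of_def)

lemma prod_notin_prime_ideal:
  assumes "finite A" and "prime_ideal_in B I" and "subring_of B"
    and "\<And>i. i \<in> A \<Longrightarrow> f i \<in> B - I"
  shows "prod f A \<in> B - I"
  using assms(1,4)
proof (induction A rule: finite_induct)
  case empty
  then show ?case using prime_ideal_in_one_notin[OF assms(2)] subring_of_one[OF assms(3)] by simp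
next
  case (insert i A)
  then show ?case
    using assms(2) subring_of_mult[OF assms(3)] unfolding prime_ideal_in_def by simp blast
qed

lemma prod_in_ideal:
  assumes "finite A" and "i \<in> A" and "f i \<in> I" and "is_ideal I"
  shows "prod f A \<in> I"
  using prod.remove[OF assms(1,2), of f] is_ideal_mult_right[OF assms(4,3)] by simp

section \<open>Minimal primes of a reduced ring\<close>

lemma subset_Zorn_dual_nonempty:
  assumes "A \<noteq> {}" and "\<And>C. C \<noteq> {} \<Longrightarrow> subset.chain A C \<Longrightarrow> \<Inter>C \<in> A"
  shows "\<exists>M\<in>A. \<forall>X\<in>A. X \<subseteq> M \<longrightarrow> X = M"
proof -
  have "\<exists>M\<in>uminus ` A. \<forall>X\<in>uminus ` A. M \<subseteq> X \<longrightarrow> X = M"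
  proof (rule subset_Zorn_nonempty)
    show "uminus ` A \<noteq> {}" using assms(1) by blast
  next
    fix C assume "C \<noteq> {}" and "subset.chain (uminus ` A) C"
    then have "uminus ` C \<noteq> {}" and "subset.chain A (uminus ` C)"
      by (auto simp: subset_chain_def)
    then have "\<Inter>(uminus ` C) \<in> A" by (rule assms(2))
    moreover have "\<Union>C = - \<Inter>(uminus ` C)" by auto
    ultimately show "\<Union>C \<in> uminus ` A" by (rule rev_image_eqI)
  qed
  then show ?thesis by (metis Compl_subset_Compl_iff double_complement image_iff)
qed

lemma is_ideal_Union_chain:
  assumes "C \<noteq> {}" and "\<And>I. I \<in> C \<Longrightarrow> is_ideal I"
    and "\<And>I J. I \<in> C \<Longrightarrow> J \<in> C \<Longrightarrow> I \<subseteq> J \<or> J \<subseteq> I"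
  shows "is_ideal (\<Union>C)"
  unfolding is_ideal_def
proof (intro conjI ballI allI)
  show "0 \<in> \<Union>C" using assms(1,2) is_ideal_zero by blast
next
  fix x y assume "x \<in> \<Union>C" and "y \<in> \<Union>C"
  then obtain I J where "I \<in> C" "J \<in> C" "x \<in> I" "y \<in> J" by blast
  then show "x + y \<in> \<Union>C" using assms(2,3) is_ideal_add by (metis UnionI subsetD)
next
  fix b x assume "x \<in> \<Union>C"
  then show "b * x \<in> \<Union>C" using assms(2) is_ideal_mult_left by blast
qed

lemma prime_ideal_Inter_chain:
  assumes "C \<noteq> {}" and "\<And>p. p \<in> C \<Longrightarrow> prime_ideal_in UNIV p"
    and "\<And>p q. p \<in> C \<Longrightarrow> q \<in> C \<Longrightarrow> p \<subseteq> q \<or> q \<subseteq> p"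
  shows "prime_ideal_in UNIV (\<Inter>C)"
  unfolding prime_ideal_in_UNIV_iff
proof (intro conjI allI impI)
  have ideals: "is_ideal p" if "p \<in> C" for p
    using assms(2)[OF that] by (rule prime_ideal_UNIV_is_ideal)
  then show "is_ideal (\<Inter>C)"
    unfolding is_ideal_def by blast
  show "1 \<notin> \<Inter>C" using assms(1,2) prime_ideal_UNIV_one by blast
next
  fix a b assume ab: "a * b \<in> \<Inter>C"
  show "a \<in> \<Inter>C \<or> b \<in> \<Inter>C"
  proof (rule ccontr)
    assume "\<not> ?thesis"
    then obtain p q where "p \<in> C" "q \<in> C" "a \<notin> p" "b \<notin> q" by blast
    with assms(2,3) ab show False
      by (metis InterE prime_ideal_UNIV_mult_notin subsetD)
  qed
qed

lemma is_ideal_add_principal: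
  assumes "is_ideal I"
  shows "is_ideal {i + r * a | i r. i \<in> I}"
  unfolding is_ideal_def
proof (intro conjI ballI allI)
  show "0 \<in> {i + r * a | i r. i \<in> I}"
    using is_ideal_zero[OF assms] by (metis (mono_tags, lifting) add_0 mem_Collect_eq mult_zero_left)
next
  fix x y assume "x \<in> {i + r * a | i r. i \<in> I}" and "y \<in> {i + r * a | i r. i \<in> I}"
  then obtain i r j s where "x = i + r * a" "y = j + s * a" "i \<in> I" "j \<in> I" by blast
  then have "x + y = (i + j) + (r + s) * a" and "i + j \<in> I"
    using is_ideal_add[OF assms] by (auto simp: algebra_simps)
  then show "x + y \<in> {i + r * a | i r. i \<in> I}" by blast
next
  fix b x assume "x \<in> {i + r * a | i r. i \<in> I}"
  then obtain i r where "x = i + r * a" "i \<in> I" by blast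
  then have "b * x = b * i + (b * r) * a" by (simp add: algebra_simps)
  moreover have "b * i \<in> I" using \<open>i \<in> I\<close> by (rule is_ideal_mult_left[OF assms])
  ultimately show "b * x \<in> {i + r * a | i r. i \<in> I}" by blast
qed

lemma prime_if_maximal_avoiding_powers:
  fixes x :: "'a::comm_ring_1"
  assumes ideal: "is_ideal M" and avoids: "\<forall>n. x ^ n \<notin> M"
    and max: "\<And>I. is_ideal I \<Longrightarrow> \<forall>n. x ^ n \<notin> I \<Longrightarrow> M \<subseteq> I \<Longrightarrow> I = M"
  shows "prime_ideal_in UNIV M"
proof -
  have power_in_sum: "\<exists>m i r. i \<in> M \<and> x ^ m = i + r * a" if "a \<notin> M" for a
  proof (rule ccontr)
    assume none: "\<not> ?thesis"
    let ?J = "{i + r * a | i r. i \<in> M}"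
    have "M \<subseteq> ?J"
    proof
      fix i assume "i \<in> M"
      moreover have "i = i + 0 * a" by simp
      ultimately show "i \<in> ?J" by blast
    qed
    moreover have "is_ideal ?J" by (rule is_ideal_add_principal[OF ideal])
    moreover have "\<forall>n. x ^ n \<notin> ?J" using none by blast
    ultimately have "?J = M" using max by simp
    moreover have "a = 0 + 1 * a" by simp
    then have "a \<in> ?J" using is_ideal_zero[OF ideal] by blast
    ultimately show False using that by blast
  qed
  show ?thesis
    unfolding prime_ideal_in_UNIV_iff
  proof (intro conjI allI impI)
    show "is_ideal M" by (fact ideal)
    show "1 \<notin> M" using avoids power_0 by metis
  next
    fix a b assume ab: "a * b \<in> M"
    show "a \<in> M \<or> b \<in> M"
    proof (rule ccontr)
      assume "\<not> ?thesis"
      then obtain m i r n j s where "i \<in> M" "x ^ m = i + r * a" "j \<in> M" "x ^ n = j + s * b"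
        using power_in_sum by meson
      then have "x ^ (m + n) = (i + r * a) * j + i * (s * b) + (r * s) * (a * b)"
        by (simp add: power_add algebra_simps)
      also have "\<dots> \<in> M"
        using is_ideal_mult_left[OF ideal \<open>j \<in> M\<close>] is_ideal_mult_right[OF ideal \<open>i \<in> M\<close>]
          is_ideal_mult_left[OF ideal ab] by (intro is_ideal_add[OF ideal])
      finally show False using avoids by blast
    qed
  qed
qed

lemma prime_ideal_avoiding_powers:
  fixes x :: "'a::comm_ring_1"
  assumes "\<forall>n. x ^ n \<noteq> 0"
  shows "\<exists>M. prime_ideal_in UNIV M \<and> x \<notin> M"
proof -
  let ?A = "{I. is_ideal I \<and> (\<forall>n. x ^ n \<notin> I)}"
  have "\<exists>M\<in>?A. \<forall>I\<in>?A. M \<subseteq> I \<longrightarrow> I = M"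
  proof (rule subset_Zorn_nonempty)
    have "{0} \<in> ?A" using assms by (simp add: is_ideal_def)
    then show "?A \<noteq> {}" by blast
  next
    fix C assume "C \<noteq> {}" and "subset.chain ?A C"
    then have "C \<subseteq> ?A" and "\<And>I J. I \<in> C \<Longrightarrow> J \<in> C \<Longrightarrow> I \<subseteq> J \<or> J \<subseteq> I"
      by (auto simp: subset_chain_def)
    with \<open>C \<noteq> {}\<close> show "\<Union>C \<in> ?A"
      using is_ideal_Union_chain[of C] by blast
  qed
  then obtain M where M: "M \<in> ?A" and max: "\<forall>I\<in>?A. M \<subseteq> I \<longrightarrow> I = M" by blast
  then have avoids: "\<forall>n. x ^ n \<notin> M" by simp
  have "prime_ideal_in UNIV M"
    using M max by (intro prime_if_maximal_avoiding_powers) auto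
  moreover have "x \<notin> M" using avoids power_one_right by metis
  ultimately show ?thesis by blast
qed

lemma minimal_prime_below:
  assumes "prime_ideal_in UNIV M"
  shows "\<exists>p. minimal_prime_in UNIV p \<and> p \<subseteq> M"
proof -
  let ?A = "{p. prime_ideal_in UNIV p \<and> p \<subseteq> M}"
  have "\<exists>p\<in>?A. \<forall>q\<in>?A. q \<subseteq> p \<longrightarrow> q = p"
  proof (rule subset_Zorn_dual_nonempty)
    show "?A \<noteq> {}" using assms by blast
  next
    fix C assume "C \<noteq> {}" and "subset.chain ?A C"
    then have "C \<subseteq> ?A" and "\<And>p q. p \<in> C \<Longrightarrow> q \<in> C \<Longrightarrow> p \<subseteq> q \<or> q \<subseteq> p"
      by (auto simp: subset_chain_def)
    then have "prime_ideal_in UNIV (\<Inter>C)"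
      using prime_ideal_Inter_chain[OF \<open>C \<noteq> {}\<close>] by blast
    moreover have "\<Inter>C \<subseteq> M" using \<open>C \<noteq> {}\<close> \<open>C \<subseteq> ?A\<close> by blast
    ultimately show "\<Inter>C \<in> ?A" by blast
  qed
  then obtain p where "prime_ideal_in UNIV p" "p \<subseteq> M"
    and "\<forall>q. prime_ideal_in UNIV q \<and> q \<subseteq> p \<longrightarrow> q = p" by (auto dest: order_trans)
  then show ?thesis unfolding minimal_prime_in_def by blast
qed

lemma reduced_Inter_minimal_primes:
  fixes x :: "'a::comm_ring_1"
  assumes "reduced TYPE('a)" and "\<And>p. minimal_prime_in UNIV p \<Longrightarrow> x \<in> p"
  shows "x = 0"
proof (rule ccontr)
  assume "x \<noteq> 0"
  with assms(1) have "\<forall>n. x ^ n \<noteq> 0" by (auto simp: reduced_def)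
  then obtain M where "prime_ideal_in UNIV M" and "x \<notin> M"
    using prime_ideal_avoiding_powers by blast
  with minimal_prime_below assms(2) show False by blast
qed

lemma minimal_primes_separating_element:
  fixes p :: "'a::comm_ring_1 set"
  assumes "finite {p::'a set. minimal_prime_in UNIV p}" and "minimal_prime_in UNIV p"
  shows "\<exists>e. e \<notin> p \<and> (\<forall>q. minimal_prime_in UNIV q \<and> q \<noteq> p \<longrightarrow> e \<in> q)"
proof -
  let ?Q = "{q. minimal_prime_in UNIV q} - {p}"
  have "\<forall>q\<in>?Q. \<exists>y. y \<in> q \<and> y \<notin> p"
  proof
    fix q assume q: "q \<in> ?Q"
    then have "prime_ideal_in UNIV q" and "q \<noteq> p" by (simp_all add: minimal_prime_in_def)
    then have "\<not> q \<subseteq> p" using assms(2) unfolding minimal_prime_in_def by blast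
    then show "\<exists>y. y \<in> q \<and> y \<notin> p" by blast
  qed
  from bchoice[OF this] obtain y where y: "\<forall>q\<in>?Q. y q \<in> q \<and> y q \<notin> p" by blast
  have p_prime: "prime_ideal_in UNIV p" using assms(2) by (rule minimal_prime_in_prime)
  have "prod y ?Q \<in> UNIV - p"
    using assms(1) y by (intro prod_notin_prime_ideal[OF _ p_prime subring_of_UNIV]) auto
  moreover have "prod y ?Q \<in> q" if "q \<in> ?Q" for q
  proof (rule prod_in_ideal)
    show "finite ?Q" using assms(1) by simp
    show "is_ideal q" using that by (simp add: minimal_prime_UNIV_is_ideal)
    show "q \<in> ?Q" by (fact that)
    show "y q \<in> q" using that y by blast
  qed
  ultimately show ?thesis by blast
qed

lemma minimal_prime_in_subring_contraction:
  fixes B :: "'a::comm_ring_1 set"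
  assumes "reduced TYPE('a)" and "finite {p::'a set. minimal_prime_in UNIV p}"
    and "subring_of B" and "minimal_prime_in B q"
  shows "\<exists>p. minimal_prime_in UNIV p \<and> q = p \<inter> B"
proof -
  let ?MP = "{p::'a set. minimal_prime_in UNIV p}"
  have q_prime: "prime_ideal_in B q" using assms(4) by (rule minimal_prime_in_prime)
  have "\<exists>p\<in>?MP. p \<inter> B \<subseteq> q"
  proof (rule ccontr)
    assume "\<not> ?thesis"
    then have "\<forall>p\<in>?MP. \<exists>y. y \<in> p \<inter> B \<and> y \<notin> q" by blast
    from bchoice[OF this] obtain y where y: "\<forall>p\<in>?MP. y p \<in> p \<inter> B \<and> y p \<notin> q" by blast
    have "prod y ?MP \<in> B - q"
      using prod_notin_prime_ideal[OF assms(2) q_prime assms(3)] y by blast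
    moreover have "prod y ?MP = 0"
    proof (rule reduced_Inter_minimal_primes[OF assms(1)])
      fix p :: "'a set" assume "minimal_prime_in UNIV p"
      then show "prod y ?MP \<in> p"
        using y minimal_prime_UNIV_is_ideal by (intro prod_in_ideal[OF assms(2)]) auto
    qed
    ultimately show False using q_prime by (simp add: prime_ideal_in_def)
  qed
  then obtain p where "minimal_prime_in UNIV p" and "p \<inter> B \<subseteq> q" by blast
  moreover have "prime_ideal_in B (p \<inter> B)"
    using minimal_prime_in_prime[OF \<open>minimal_prime_in UNIV p\<close>] assms(3)
    by (rule prime_ideal_in_Int_subring)
  ultimately show ?thesis using assms(4) unfolding minimal_prime_in_def by blast
qed

section \<open>The fraction field qf(A/p)\<close>

lemma frac_mem_iff: "(c, d) \<in> frac p a b \<longleftrightarrow> b \<notin> p \<and> d \<notin> p \<and> a * d - b * c \<in> p"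
  by (simp add: frac_def frac_rel_def)

lemma qf_ring_zero: "\<zero>\<^bsub>qf_ring p\<^esub> = frac p 0 1"
  and qf_ring_one: "\<one>\<^bsub>qf_ring p\<^esub> = frac p 1 1"
  by (simp_all add: qf_ring_def)

lemma qf_ring_carrier: "carrier (qf_ring p) = {frac p a b | a b. b \<notin> p}"
  by (auto simp: qf_ring_def quotient_def frac_def)

context
  fixes p :: "'a::comm_ring_1 set"
  assumes prime: "prime_ideal_in UNIV p"
begin

lemma equiv_frac_rel: "equiv (UNIV \<times> - p) (frac_rel p)"
proof (rule equivI)
  have ideal: "is_ideal p" using prime by (rule prime_ideal_UNIV_is_ideal)
  show "frac_rel p \<subseteq> (UNIV \<times> - p) \<times> (UNIV \<times> - p)"
    by (auto simp: frac_rel_def)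
  show "refl_on (UNIV \<times> - p) (frac_rel p)"
    using is_ideal_zero[OF ideal] by (auto simp: refl_on_def frac_rel_def mult.commute)
  show "sym (frac_rel p)"
  proof (rule symI)
    fix x y assume "(x, y) \<in> frac_rel p"
    then obtain a b c d where xy: "x = (a, b)" "y = (c, d)" "b \<notin> p" "d \<notin> p"
      and rel: "a * d - b * c \<in> p"
      by (auto simp: frac_rel_def)
    from rel have "(- 1) * (a * d - b * c) \<in> p" by (rule is_ideal_mult_left[OF ideal])
    moreover have "(- 1) * (a * d - b * c) = c * b - d * a" by (simp add: algebra_simps)
    ultimately show "(y, x) \<in> frac_rel p" using xy by (simp add: frac_rel_def mult.commute)
  qed
  show "trans (frac_rel p)"
  proof (rule transI)
    fix x y z assume "(x, y) \<in> frac_rel p" and "(y, z) \<in> frac_rel p"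
    then obtain a b c d e f where xyz: "x = (a, b)" "y = (c, d)" "z = (e, f)"
      and dens: "b \<notin> p" "d \<notin> p" "f \<notin> p"
      and xy: "a * d - b * c \<in> p" and yz: "c * f - d * e \<in> p"
      by (auto simp: frac_rel_def)
    have "d * (a * f - b * e) = f * (a * d - b * c) + b * (c * f - d * e)"
      by (simp add: algebra_simps)
    also have "\<dots> \<in> p"
      using is_ideal_mult_left[OF ideal xy] is_ideal_mult_left[OF ideal yz]
      by (rule is_ideal_add[OF ideal])
    finally have "a * f - b * e \<in> p"
      using dens(2) prime by (auto simp: prime_ideal_in_UNIV_iff)
    then show "(x, z) \<in> frac_rel p" using xyz dens by (simp add: frac_rel_def)
  qed
qed

lemma frac_eq_iff:
  assumes "b \<notin> p" and "d \<notin> p"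
  shows "frac p a b = frac p c d \<longleftrightarrow> a * d - b * c \<in> p"
  using eq_equiv_class_iff[OF equiv_frac_rel, of "(a, b)" "(c, d)"] assms
  by (simp add: frac_def frac_rel_def)

lemma frac_num_den:
  assumes "X \<in> carrier (qf_ring p)"
  shows "frac_den X \<notin> p" and "X = frac p (frac_num X) (frac_den X)"
proof -
  have "X \<in> (UNIV \<times> - p) // frac_rel p" using assms by (simp add: qf_ring_def)
  then have "(SOME x. x \<in> X) \<in> X"
    using equiv_class_self[OF equiv_frac_rel] by (metis quotientE someI)
  then have x: "(frac_num X, frac_den X) \<in> X"
    by (simp add: frac_num_def frac_den_def)
  from assms obtain a b where "b \<notin> p" and X: "X = frac p a b"
    unfolding qf_ring_carrier by blast
  with x show "frac_den X \<notin> p" by (simp add: frac_mem_iff)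
  from x X \<open>b \<notin> p\<close> show "X = frac p (frac_num X) (frac_den X)"
    by (simp add: frac_mem_iff frac_eq_iff)
qed

lemma frac_in_carrier: "b \<notin> p \<Longrightarrow> frac p a b \<in> carrier (qf_ring p)"
  by (auto simp: qf_ring_carrier)

lemma frac_mult_cong:
  assumes "b \<notin> p" and "d \<notin> p" and "b' \<notin> p" and "d' \<notin> p"
    and "frac p a b = frac p a' b'" and "frac p c d = frac p c' d'"
  shows "frac p (a * c) (b * d) = frac p (a' * c') (b' * d')"
proof -
  have "a * b' - b * a' \<in> p" and "c * d' - d * c' \<in> p"
    using assms by (simp_all add: frac_eq_iff)
  then have "(a * b' - b * a') * (c * d') + (b * a') * (c * d' - d * c') \<in> p"
    using prime_ideal_UNIV_is_ideal[OF prime] is_ideal_add is_ideal_mult_left is_ideal_mult_right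
    by metis
  then show ?thesis
    using assms(1-4) prime_ideal_UNIV_mult_notin[OF prime] by (simp add: frac_eq_iff algebra_simps)
qed

lemma frac_add_cong:
  assumes "b \<notin> p" and "d \<notin> p" and "b' \<notin> p" and "d' \<notin> p"
    and "frac p a b = frac p a' b'" and "frac p c d = frac p c' d'"
  shows "frac p (a * d + c * b) (b * d) = frac p (a' * d' + c' * b') (b' * d')"
proof -
  have "a * b' - b * a' \<in> p" and "c * d' - d * c' \<in> p"
    using assms by (simp_all add: frac_eq_iff)
  then have "(a * b' - b * a') * (d * d') + (c * d' - d * c') * (b * b') \<in> p"
    using prime_ideal_UNIV_is_ideal[OF prime] is_ideal_add is_ideal_mult_right by metis
  then show ?thesis
    using assms(1-4) prime_ideal_UNIV_mult_notin[OF prime] by (simp add: frac_eq_iff algebra_simps)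
qed

lemma qf_ring_mult_frac:
  assumes "b \<notin> p" and "d \<notin> p"
  shows "frac p a b \<otimes>\<^bsub>qf_ring p\<^esub> frac p c d = frac p (a * c) (b * d)"
  using frac_mult_cong[OF _ _ assms] frac_num_den[OF frac_in_carrier[OF assms(1)], of a]
    frac_num_den[OF frac_in_carrier[OF assms(2)], of c]
  by (simp add: qf_ring_def)

lemma qf_ring_add_frac:
  assumes "b \<notin> p" and "d \<notin> p"
  shows "frac p a b \<oplus>\<^bsub>qf_ring p\<^esub> frac p c d = frac p (a * d + c * b) (b * d)"
  using frac_add_cong[OF _ _ assms] frac_num_den[OF frac_in_carrier[OF assms(1)], of a]
    frac_num_den[OF frac_in_carrier[OF assms(2)], of c]
  by (simp add: qf_ring_def)

lemma frac_eq_zero_iff: "d \<notin> p \<Longrightarrow> frac p n d = \<zero>\<^bsub>qf_ring p\<^esub> \<longleftrightarrow> n \<in> p"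
  using frac_eq_iff[of d 1 n 0] prime_ideal_UNIV_one[OF prime] by (simp add: qf_ring_zero)

lemma qf_ring_a_inv_frac:
  assumes "d \<notin> p"
  shows "\<ominus>\<^bsub>qf_ring p\<^esub> frac p n d = frac p (- n) d"
  unfolding a_inv_def m_inv_def
proof (simp, rule the_equality)
  have "n * d + - n * d \<in> p" using is_ideal_zero[OF prime_ideal_UNIV_is_ideal[OF prime]] by simp
  then show "frac p (- n) d \<in> carrier (qf_ring p) \<and>
      frac p n d \<oplus>\<^bsub>qf_ring p\<^esub> frac p (- n) d = \<zero>\<^bsub>qf_ring p\<^esub> \<and>
      frac p (- n) d \<oplus>\<^bsub>qf_ring p\<^esub> frac p n d = \<zero>\<^bsub>qf_ring p\<^esub>"
    using assms prime_ideal_UNIV_mult_notin[OF prime]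
    by (simp add: frac_in_carrier qf_ring_add_frac frac_eq_zero_iff algebra_simps)
next
  fix Y assume Y: "Y \<in> carrier (qf_ring p) \<and>
      frac p n d \<oplus>\<^bsub>qf_ring p\<^esub> Y = \<zero>\<^bsub>qf_ring p\<^esub> \<and> Y \<oplus>\<^bsub>qf_ring p\<^esub> frac p n d = \<zero>\<^bsub>qf_ring p\<^esub>"
  then obtain a b where b: "b \<notin> p" and Y_eq: "Y = frac p a b" by (auto simp: qf_ring_carrier)
  with Y assms have "n * b + a * d \<in> p"
    by (simp add: qf_ring_add_frac frac_eq_zero_iff prime_ideal_UNIV_mult_notin[OF prime])
  then show "Y = frac p (- n) d"
    using Y_eq b assms by (simp add: frac_eq_iff algebra_simps)
qed

lemma qf_ring_m_inv_frac:
  assumes "d \<notin> p" and "n \<notin> p"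
  shows "inv\<^bsub>qf_ring p\<^esub> frac p n d = frac p d n"
  unfolding m_inv_def
proof (rule the_equality)
  have "n * d - d * n \<in> p" using is_ideal_zero[OF prime_ideal_UNIV_is_ideal[OF prime]] by simp
  then show "frac p d n \<in> carrier (qf_ring p) \<and>
      frac p n d \<otimes>\<^bsub>qf_ring p\<^esub> frac p d n = \<one>\<^bsub>qf_ring p\<^esub> \<and>
      frac p d n \<otimes>\<^bsub>qf_ring p\<^esub> frac p n d = \<one>\<^bsub>qf_ring p\<^esub>"
    using assms prime_ideal_UNIV_mult_notin[OF prime] prime_ideal_UNIV_one[OF prime]
    by (simp add: frac_in_carrier qf_ring_mult_frac frac_eq_iff qf_ring_one mult.commute)
next
  fix Y assume Y: "Y \<in> carrier (qf_ring p) \<and>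
      frac p n d \<otimes>\<^bsub>qf_ring p\<^esub> Y = \<one>\<^bsub>qf_ring p\<^esub> \<and> Y \<otimes>\<^bsub>qf_ring p\<^esub> frac p n d = \<one>\<^bsub>qf_ring p\<^esub>"
  then obtain a b where b: "b \<notin> p" and Y_eq: "Y = frac p a b" by (auto simp: qf_ring_carrier)
  with Y assms have "n * a - d * b \<in> p"
    using prime_ideal_UNIV_mult_notin[OF prime] prime_ideal_UNIV_one[OF prime]
    by (simp add: qf_ring_mult_frac frac_eq_iff qf_ring_one)
  then show "Y = frac p d n"
    using Y_eq b assms by (simp add: frac_eq_iff algebra_simps)
qed

end

definition fracs_over :: "'a::comm_ring_1 set \<Rightarrow> 'a set \<Rightarrow> ('a \<times> 'a) set set" where
  "fracs_over p B = {frac p n d | n d. n \<in> B \<and> d \<in> B \<and> d \<notin> p}"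

lemma fracs_overI: "n \<in> B \<Longrightarrow> d \<in> B \<Longrightarrow> d \<notin> p \<Longrightarrow> frac p n d \<in> fracs_over p B"
  by (auto simp: fracs_over_def)

lemma fracs_overE:
  assumes "X \<in> fracs_over p B"
  obtains n d where "n \<in> B" "d \<in> B" "d \<notin> p" "X = frac p n d"
  using assms by (auto simp: fracs_over_def)

lemma generate_field_subset_fracs_over:
  assumes "prime_ideal_in UNIV p" and "subring_of B" and "H \<subseteq> fracs_over p B"
  shows "generate_field (qf_ring p) H \<subseteq> fracs_over p B"
proof
  note mult_notin = prime_ideal_UNIV_mult_notin[OF assms(1)]
  fix X assume "X \<in> generate_field (qf_ring p) H"
  then show "X \<in> fracs_over p B"
  proof (induction rule: generate_field.induct)
    case one
    then show ?case
      using subring_of_one[OF assms(2)] prime_ideal_UNIV_one[OF assms(1)]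
      by (simp add: fracs_overI qf_ring_one)
  next
    case (incl h)
    then show ?case using assms(3) by blast
  next
    case (a_inv h)
    obtain n d where "n \<in> B" "d \<in> B" "d \<notin> p" "h = frac p n d"
      using a_inv.IH by (rule fracs_overE)
    then show ?case
      using qf_ring_a_inv_frac[OF assms(1)] subring_of_uminus[OF assms(2)]
      by (simp add: fracs_overI)
  next
    case (m_inv h)
    obtain n d where nd: "n \<in> B" "d \<in> B" "d \<notin> p" "h = frac p n d"
      using m_inv.IH by (rule fracs_overE)
    moreover have "n \<notin> p"
      using m_inv.hyps(2) nd frac_eq_zero_iff[OF assms(1)] by simp
    ultimately show ?case
      using qf_ring_m_inv_frac[OF assms(1)] by (simp add: fracs_overI)
  next
    case (eng_add h1 h2)
    obtain n1 d1 where "n1 \<in> B" "d1 \<in> B" "d1 \<notin> p" "h1 = frac p n1 d1"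
      using eng_add.IH(1) by (rule fracs_overE)
    moreover obtain n2 d2 where "n2 \<in> B" "d2 \<in> B" "d2 \<notin> p" "h2 = frac p n2 d2"
      using eng_add.IH(2) by (rule fracs_overE)
    ultimately show ?case
      using qf_ring_add_frac[OF assms(1)] mult_notin
        subring_of_add[OF assms(2)] subring_of_mult[OF assms(2)]
      by (simp add: fracs_overI)
  next
    case (eng_mult h1 h2)
    obtain n1 d1 where "n1 \<in> B" "d1 \<in> B" "d1 \<notin> p" "h1 = frac p n1 d1"
      using eng_mult.IH(1) by (rule fracs_overE)
    moreover obtain n2 d2 where "n2 \<in> B" "d2 \<in> B" "d2 \<notin> p" "h2 = frac p n2 d2"
      using eng_mult.IH(2) by (rule fracs_overE)
    ultimately show ?case
      using qf_ring_mult_frac[OF assms(1)] mult_notin subring_of_mult[OF assms(2)]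
      by (simp add: fracs_overI)
  qed
qed

text \<open>qf(A/p) = qf(B/(B \<inter> p)): every a is congruent to some n/d modulo p.\<close>

definition generates_fraction_field :: "'a::comm_ring_1 set \<Rightarrow> 'a set \<Rightarrow> bool" where
  "generates_fraction_field B p \<longleftrightarrow> (\<forall>a. \<exists>n\<in>B. \<exists>d\<in>B. d \<notin> p \<and> a * d - n \<in> p)"

lemma fg_field_ext_finite_generators:
  assumes "prime_ideal_in UNIV p" and "fg_field_ext K iota p"
  shows "\<exists>G. finite G \<and>
    (\<forall>B. subring_of B \<and> iota ` K \<subseteq> B \<and> G \<subseteq> B \<longrightarrow> generates_fraction_field B p)"
proof -
  note one_notin = prime_ideal_UNIV_one[OF assms(1)]
  obtain S where "finite S" and S: "S \<subseteq> carrier (qf_ring p)"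
    and gen: "generate_field (qf_ring p) ((\<lambda>k. frac p (iota k) 1) ` K \<union> S) = carrier (qf_ring p)"
    using assms(2) by (auto simp: fg_field_ext_def)
  let ?G = "frac_num ` S \<union> frac_den ` S"
  have "\<forall>B. subring_of B \<and> iota ` K \<subseteq> B \<and> ?G \<subseteq> B \<longrightarrow> generates_fraction_field B p"
    unfolding generates_fraction_field_def
  proof (intro allI impI)
    fix B a assume "subring_of B \<and> iota ` K \<subseteq> B \<and> ?G \<subseteq> B"
    then have B: "subring_of B" "iota ` K \<subseteq> B" "?G \<subseteq> B" by simp_all
    have "(\<lambda>k. frac p (iota k) 1) ` K \<subseteq> fracs_over p B"
      using B(2) subring_of_one[OF B(1)] one_notin by (intro image_subsetI fracs_overI) auto
    moreover have "S \<subseteq> fracs_over p B"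
    proof
      fix X assume X: "X \<in> S"
      then have "frac_num X \<in> B" and "frac_den X \<in> B" using B(3) by auto
      moreover have "frac_den X \<notin> p" and "X = frac p (frac_num X) (frac_den X)"
        using X S frac_num_den[OF assms(1)] by auto
      ultimately show "X \<in> fracs_over p B" by (metis fracs_overI)
    qed
    ultimately have "(\<lambda>k. frac p (iota k) 1) ` K \<union> S \<subseteq> fracs_over p B" by blast
    then have "carrier (qf_ring p) \<subseteq> fracs_over p B"
      unfolding gen[symmetric] by (rule generate_field_subset_fracs_over[OF assms(1) B(1)])
    moreover have "frac p a 1 \<in> carrier (qf_ring p)"
      using frac_in_carrier[OF assms(1) one_notin] .
    ultimately have "frac p a 1 \<in> fracs_over p B" by blast
    then obtain n d where "n \<in> B" "d \<in> B" "d \<notin> p" and "frac p a 1 = frac p n d"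
      by (rule fracs_overE)
    moreover from this have "a * d - n \<in> p"
      using frac_eq_iff[OF assms(1) one_notin, of d a n] by simp
    ultimately show "\<exists>n\<in>B. \<exists>d\<in>B. d \<notin> p \<and> a * d - n \<in> p" by blast
  qed
  moreover have "finite ?G" using \<open>finite S\<close> by simp
  ultimately show ?thesis by blast
qed

text \<open>A lies in the localization of B at B - p.\<close>

definition has_denominators :: "'a::comm_ring_1 set \<Rightarrow> 'a set \<Rightarrow> bool" where
  "has_denominators B p \<longleftrightarrow> (\<forall>a. \<exists>d\<in>B. d \<notin> p \<and> a * d \<in> B)"

lemma has_denominators_if_separating_element:
  fixes p :: "'a::comm_ring_1 set"
  assumes "reduced TYPE('a)" and "prime_ideal_in UNIV p" and "subring_of B"
    and "e \<in> B" and "e \<notin> p" and "\<And>q. minimal_prime_in UNIV q \<Longrightarrow> q \<noteq> p \<Longrightarrow> e \<in> q"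
    and "generates_fraction_field B p"
  shows "has_denominators B p"
  unfolding has_denominators_def
proof
  fix a
  obtain n d where "n \<in> B" "d \<in> B" "d \<notin> p" and "a * d - n \<in> p"
    using assms(7) unfolding generates_fraction_field_def by blast
  have "e * (a * d - n) = 0"
  proof (rule reduced_Inter_minimal_primes[OF assms(1)])
    fix q :: "'a set" assume q: "minimal_prime_in UNIV q"
    show "e * (a * d - n) \<in> q"
    proof (cases "q = p")
      case True
      then show ?thesis
        using \<open>a * d - n \<in> p\<close> prime_ideal_UNIV_is_ideal[OF assms(2)] is_ideal_mult_left by blast
    next
      case False
      then show ?thesis
        using assms(6)[OF q] minimal_prime_UNIV_is_ideal[OF q] is_ideal_mult_right by blast
    qed
  qed
  then have "a * (e * d) = e * n" by (simp add: algebra_simps)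
  moreover have "e * d \<in> B" and "e * n \<in> B"
    using \<open>n \<in> B\<close> \<open>d \<in> B\<close> assms(4) subring_of_mult[OF assms(3)] by simp_all
  moreover have "e * d \<notin> p"
    using \<open>d \<notin> p\<close> assms(5) prime_ideal_UNIV_mult_notin[OF assms(2)] by simp
  ultimately show "\<exists>d'\<in>B. d' \<notin> p \<and> a * d' \<in> B" by metis
qed

section \<open>Extending orderings from a subring\<close>

lemma uminus_image_iff: "(x::'a::group_add) \<in> uminus ` S \<longleftrightarrow> - x \<in> S"
  by (auto intro: rev_image_eqI[of "- x"])

locale ordering_lifting =
  fixes B p P :: "'a::comm_ring_1 set"
  assumes subring: "subring_of B"
    and prime: "prime_ideal_in UNIV p"
    and denominators: "has_denominators B p"
    and ordering: "ordering_of B P"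
    and support: "P \<inter> uminus ` P = p \<inter> B"
begin

lemma P_subset: "P \<subseteq> B"
  and P_add: "x \<in> P \<Longrightarrow> y \<in> P \<Longrightarrow> x + y \<in> P"
  and P_mult: "x \<in> P \<Longrightarrow> y \<in> P \<Longrightarrow> x * y \<in> P"
  and P_total: "x \<in> B \<Longrightarrow> x \<in> P \<or> - x \<in> P"
  using ordering uminus_image_iff[of x P] by (auto simp: ordering_of_def)

lemma P_support_iff: "x \<in> P \<and> - x \<in> P \<longleftrightarrow> x \<in> p \<and> x \<in> B"
  using support uminus_image_iff[of x P] by blast

lemma square_in_P: "b \<in> B \<Longrightarrow> b * b \<in> P"
  using P_total P_mult by (metis minus_mult_minus)

lemma denominatorE:
  obtains d where "d \<in> B" and "d \<notin> p" and "a * d \<in> B"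
  using denominators by (auto simp: has_denominators_def)

definition lifted :: "'a set" where
  "lifted = {a. \<exists>d\<in>B. d \<notin> p \<and> a * d \<in> B \<and> a * d * d \<in> P}"

lemma lifted_denominator_independent:
  assumes "d \<in> B" and "d \<notin> p" and "a * d \<in> B" and "a * d * d \<in> P"
    and "d' \<in> B" and "d' \<notin> p" and "a * d' \<in> B"
  shows "a * d' * d' \<in> P"
proof (rule ccontr)
  assume not_in: "a * d' * d' \<notin> P"
  have in_B: "a * d' * d' \<in> B" using assms(5,7) subring_of_mult[OF subring] by blast
  then have "- (a * d' * d') \<in> P" using P_total not_in by blast
  from P_mult[OF this square_in_P[OF assms(1)]]
  have "- (a * (d * d * (d' * d'))) \<in> P" by (simp add: algebra_simps)
  moreover have "a * (d * d * (d' * d')) \<in> P"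
    using P_mult[OF assms(4) square_in_P[OF assms(5)]] by (simp add: algebra_simps)
  ultimately have "a * (d * d * (d' * d')) \<in> p"
    using P_support_iff by blast
  moreover have "d * d * (d' * d') \<notin> p"
    using assms(2,6) prime_ideal_UNIV_mult_notin[OF prime] by simp
  ultimately have "a \<in> p" using prime_ideal_UNIV_mult_iff[OF prime] by blast
  then have "a * d' * d' \<in> p"
    using prime_ideal_UNIV_mult_iff[OF prime assms(6)] by simp
  with in_B not_in show False using P_support_iff by blast
qed

lemma lifted_iff:
  assumes "d \<in> B" and "d \<notin> p" and "a * d \<in> B"
  shows "a \<in> lifted \<longleftrightarrow> a * d * d \<in> P"
  using assms lifted_denominator_independent unfolding lifted_def by blast

lemma uminus_lifted_iff:
  assumes "d \<in> B" and "d \<notin> p" and "a * d \<in> B"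
  shows "- a \<in> lifted \<longleftrightarrow> - (a * d * d) \<in> P"
  using lifted_iff[of d "- a"] assms subring_of_uminus[OF subring] by simp

lemma lifted_Int_subring: "lifted \<inter> B = P"
  using lifted_iff[of 1] subring_of_one[OF subring] prime_ideal_UNIV_one[OF prime] P_subset
  by auto

lemma lifted_support: "lifted \<inter> uminus ` lifted = p"
proof -
  have "a \<in> lifted \<inter> uminus ` lifted \<longleftrightarrow> a \<in> p" for a
  proof -
    obtain d where d: "d \<in> B" "d \<notin> p" "a * d \<in> B" by (rule denominatorE)
    have "a * d * d \<in> B" using d subring_of_mult[OF subring] by blast
    then have "a \<in> lifted \<inter> uminus ` lifted \<longleftrightarrow> a * d * d \<in> p"
      using lifted_iff[OF d] uminus_lifted_iff[OF d] uminus_image_iff[of a lifted]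
        P_support_iff by blast
    also have "\<dots> \<longleftrightarrow> a \<in> p"
      using prime_ideal_UNIV_mult_iff[OF prime d(2)] by simp
    finally show ?thesis .
  qed
  then show ?thesis by blast
qed


lemma liftedI:
  assumes "d \<in> B" and "d \<notin> p" and "a * d \<in> B" and "a * d * d \<in> P"
  shows "a \<in> lifted"
  using assms unfolding lifted_def by blast

lemma liftedE:
  assumes "a \<in> lifted"
  obtains d where "d \<in> B" and "d \<notin> p" and "a * d \<in> B" and "a * d * d \<in> P"
  using assms unfolding lifted_def by blast

lemma lifted_add: "x \<in> lifted \<Longrightarrow> y \<in> lifted \<Longrightarrow> x + y \<in> lifted"
  and lifted_mult: "x \<in> lifted \<Longrightarrow> y \<in> lifted \<Longrightarrow> x * y \<in> lifted"
proof -
  assume "x \<in> lifted" and "y \<in> lifted"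
  then obtain d e where d: "d \<in> B" "d \<notin> p" "x * d \<in> B" "x * d * d \<in> P"
    and e: "e \<in> B" "e \<notin> p" "y * e \<in> B" "y * e * e \<in> P"
    by (metis liftedE)
  have de: "d * e \<in> B" "d * e \<notin> p"
    using d e subring_of_mult[OF subring] prime_ideal_UNIV_mult_notin[OF prime] by auto
  have "(x * d) * e + (y * e) * d \<in> B"
    using d e subring_of_mult[OF subring] subring_of_add[OF subring] by simp
  moreover have "(x * d * d) * (e * e) + (y * e * e) * (d * d) \<in> P"
    using d e P_add P_mult square_in_P by simp
  ultimately show "x + y \<in> lifted"
    using liftedI[OF de] by (simp add: algebra_simps)
  have "(x * d) * (y * e) \<in> B"
    using d e subring_of_mult[OF subring] by simp
  moreover have "(x * d * d) * (y * e * e) \<in> P"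
    using d e P_mult by simp
  ultimately show "x * y \<in> lifted"
    using liftedI[OF de] by (simp add: algebra_simps)
qed

lemma lifted_total: "a \<in> lifted \<or> - a \<in> lifted"
proof -
  obtain d where d: "d \<in> B" "d \<notin> p" "a * d \<in> B" by (rule denominatorE)
  then have "a * d * d \<in> B" using subring_of_mult[OF subring] by blast
  then show ?thesis
    using P_total lifted_iff[OF d] uminus_lifted_iff[OF d] by blast
qed

lemma ordering_of_lifted: "ordering_of UNIV lifted"
  unfolding ordering_of_def
proof (intro conjI ballI)
  show "lifted \<union> uminus ` lifted = UNIV"
    using lifted_total uminus_image_iff by blast
  show "prime_ideal_in UNIV (lifted \<inter> uminus ` lifted)"
    using lifted_support prime by simp
qed (simp_all add: lifted_add lifted_mult)

lemma preordering_subset_lifted: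
  assumes "preordering T" and "T \<inter> B \<subseteq> P"
  shows "T \<subseteq> lifted"
proof
  fix t assume "t \<in> T"
  obtain d where d: "d \<in> B" "d \<notin> p" "t * d \<in> B" by (rule denominatorE)
  have "t * d\<^sup>2 \<in> T" using assms(1) \<open>t \<in> T\<close> by (simp add: preordering_def)
  moreover have "t * d * d \<in> B" using d subring_of_mult[OF subring] by blast
  ultimately have "t * d * d \<in> P" using assms(2) by (auto simp: power2_eq_square mult.assoc)
  then show "t \<in> lifted" using liftedI[OF d] by blast
qed

end

lemma archimedean_ordering_Int_subring:
  assumes "archimedean_ordering UNIV Q" and "subring_of B"
  shows "archimedean_ordering B (Q \<inter> B)"
  using assms subring_of_diff subring_of_of_nat unfolding archimedean_ordering_def by blast

lemma almost_archimedean_subring: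
  fixes T B :: "'a::comm_ring_1 set"
  assumes "preordering T" and "almost_archimedean UNIV T"
    and "reduced TYPE('a)" and "finite {p::'a set. minimal_prime_in UNIV p}"
    and "subring_of B" and "\<And>p. minimal_prime_in UNIV p \<Longrightarrow> has_denominators B p"
  shows "almost_archimedean B (T \<inter> B)"
  unfolding almost_archimedean_def
proof (intro ballI impI)
  fix P assume P: "P \<in> sper B (T \<inter> B)" and min: "minimal_prime_in B (P \<inter> uminus ` P)"
  obtain p where p: "minimal_prime_in UNIV p" and supp: "P \<inter> uminus ` P = p \<inter> B"
    using minimal_prime_in_subring_contraction[OF assms(3,4,5) min] by blast
  interpret ordering_lifting B p P
    using assms(5,6) p supp P minimal_prime_in_prime[OF p]
    by unfold_locales (simp_all add: sper_def)
  have "lifted \<in> sper UNIV T"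
    using ordering_of_lifted preordering_subset_lifted[OF assms(1)] P by (simp add: sper_def)
  moreover have "minimal_prime_in UNIV (lifted \<inter> uminus ` lifted)"
    using lifted_support p by simp
  ultimately have "archimedean_ordering UNIV lifted"
    using assms(2) by (simp add: almost_archimedean_def)
  then show "archimedean_ordering B P"
    using archimedean_ordering_Int_subring[OF _ assms(5)] lifted_Int_subring by metis
qed

section \<open>Finitely generated subalgebras\<close>

lemma K_subalgebra_K_subalg_gen: "K_subalgebra K iota (K_subalg_gen K iota S)"
  unfolding K_subalg_gen_def K_subalgebra_def subring_of_def by blast

lemma K_subalg_gen_superset: "S \<subseteq> K_subalg_gen K iota S"
  by (auto simp: K_subalg_gen_def)

lemma K_subalg_gen_least: "K_subalgebra K iota B \<Longrightarrow> S \<subseteq> B \<Longrightarrow> K_subalg_gen K iota S \<subseteq> B"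
  by (auto simp: K_subalg_gen_def)

lemma fg_K_subalgebra_K_subalgebra: "fg_K_subalgebra K iota B \<Longrightarrow> K_subalgebra K iota B"
  using K_subalgebra_K_subalg_gen by (auto simp: fg_K_subalgebra_def)

lemma finite_generators_with_denominators:
  fixes F :: "'a::comm_ring_1 set"
  assumes "ff_algebra K iota" and "reduced TYPE('a)" and "finite F"
  shows "\<exists>G. finite G \<and> F \<subseteq> G \<and>
           (\<forall>p. minimal_prime_in UNIV p \<longrightarrow> has_denominators (K_subalg_gen K iota G) p)"
proof -
  let ?MP = "{p::'a set. minimal_prime_in UNIV p}"
  have fin: "finite ?MP" using assms(1) by (simp add: ff_algebra_def)
  have "\<forall>p\<in>?MP. \<exists>G. finite G \<and>
      (\<forall>B. subring_of B \<and> iota ` K \<subseteq> B \<and> G \<subseteq> B \<longrightarrow> generates_fraction_field B p)"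
    using assms(1)
    by (intro ballI fg_field_ext_finite_generators minimal_prime_in_prime) (simp_all add: ff_algebra_def)
  from bchoice[OF this] obtain gens where gens: "\<forall>p\<in>?MP. finite (gens p) \<and>
      (\<forall>B. subring_of B \<and> iota ` K \<subseteq> B \<and> gens p \<subseteq> B \<longrightarrow> generates_fraction_field B p)"
    by blast
  have "\<forall>p\<in>?MP. \<exists>e. e \<notin> p \<and> (\<forall>q. minimal_prime_in UNIV q \<and> q \<noteq> p \<longrightarrow> e \<in> q)"
    using minimal_primes_separating_element[OF fin] by blast
  from bchoice[OF this] obtain sep where sep: "\<forall>p\<in>?MP. sep p \<notin> p \<and>
      (\<forall>q. minimal_prime_in UNIV q \<and> q \<noteq> p \<longrightarrow> sep p \<in> q)" by blast
  define G where "G = F \<union> \<Union>(gens ` ?MP) \<union> sep ` ?MP"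
  let ?B = "K_subalg_gen K iota G"
  have B: "subring_of ?B" "iota ` K \<subseteq> ?B" "G \<subseteq> ?B"
    using K_subalgebra_K_subalg_gen[of K iota G] K_subalg_gen_superset[of G K iota]
    by (simp_all add: K_subalgebra_def)
  show ?thesis
  proof (intro exI conjI allI impI)
    show "finite G" unfolding G_def using assms(3) fin gens by simp
    show "F \<subseteq> G" unfolding G_def by blast
  next
    fix p :: "'a set" assume p: "minimal_prime_in UNIV p"
    show "has_denominators ?B p"
    proof (rule has_denominators_if_separating_element[OF assms(2) minimal_prime_in_prime[OF p] B(1)])
      show "sep p \<in> ?B" using p B(3) unfolding G_def by blast
      show "sep p \<notin> p" using p sep by blast
      show "\<And>q. minimal_prime_in UNIV q \<Longrightarrow> q \<noteq> p \<Longrightarrow> sep p \<in> q" using p sep by blast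
      have "gens p \<subseteq> ?B" using p B(3) unfolding G_def by blast
      then show "generates_fraction_field ?B p" using p gens B(1,2) by blast
    qed
  qed
qed

lemma almost_archimedean_fg_K_subalgebra_superset:
  fixes T F :: "'a::comm_ring_1 set"
  assumes "preordering T" and "ff_algebra K iota" and "almost_archimedean UNIV T"
    and "reduced TYPE('a)" and "finite F"
  shows "\<exists>B. fg_K_subalgebra K iota B \<and> almost_archimedean B (T \<inter> B) \<and> F \<subseteq> B"
proof -
  obtain G where "finite G" and "F \<subseteq> G"
    and denominators: "\<And>p. minimal_prime_in UNIV p \<Longrightarrow> has_denominators (K_subalg_gen K iota G) p"
    using finite_generators_with_denominators[OF assms(2,4,5)] by blast
  let ?B = "K_subalg_gen K iota G"
  have "fg_K_subalgebra K iota ?B"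
    using \<open>finite G\<close> by (auto simp: fg_K_subalgebra_def)
  moreover have "almost_archimedean ?B (T \<inter> ?B)"
  proof (rule almost_archimedean_subring[OF assms(1,3,4)])
    show "finite {p::'a set. minimal_prime_in UNIV p}" using assms(2) by (simp add: ff_algebra_def)
    show "subring_of ?B" using K_subalgebra_K_subalg_gen[of K iota G] by (simp add: K_subalgebra_def)
  qed (fact denominators)
  moreover have "F \<subseteq> ?B" using \<open>F \<subseteq> G\<close> K_subalg_gen_superset by blast
  ultimately show ?thesis by blast
qed

lemma directed_union_of_fg_K_subalgebras:
  assumes "\<And>F. finite F \<Longrightarrow> \<exists>B. fg_K_subalgebra K iota B \<and> Q B \<and> F \<subseteq> B"
  shows "UNIV = \<Union>{B. fg_K_subalgebra K iota B \<and> Q B}"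
    and "fg_K_subalgebra K iota B1 \<Longrightarrow> fg_K_subalgebra K iota B2 \<Longrightarrow>
      \<exists>B3. fg_K_subalgebra K iota B3 \<and> Q B3 \<and> B1 \<subseteq> B3 \<and> B2 \<subseteq> B3"
proof -
  show "UNIV = \<Union>{B. fg_K_subalgebra K iota B \<and> Q B}"
    using assms[of "{_}"] by blast
  assume "fg_K_subalgebra K iota B1" and "fg_K_subalgebra K iota B2"
  then obtain S1 S2 where "finite S1" "B1 = K_subalg_gen K iota S1"
    and "finite S2" "B2 = K_subalg_gen K iota S2"
    by (auto simp: fg_K_subalgebra_def)
  moreover obtain B3 where "fg_K_subalgebra K iota B3" "Q B3" "S1 \<union> S2 \<subseteq> B3"
    using assms[of "S1 \<union> S2"] \<open>finite S1\<close> \<open>finite S2\<close> by blast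
  ultimately show "\<exists>B3. fg_K_subalgebra K iota B3 \<and> Q B3 \<and> B1 \<subseteq> B3 \<and> B2 \<subseteq> B3"
    using K_subalg_gen_least fg_K_subalgebra_K_subalgebra by (metis le_sup_iff)
qed

theorem lemma4p7:
  fixes K :: "real set" and iota :: "real \<Rightarrow> 'a::comm_ring_1" and T :: "'a set"
  assumes "subfield_of_reals K"
    and "K_algebra_map K iota"
    and "preordering T"
    and "ff_algebra K iota"
    and "almost_archimedean (UNIV :: 'a set) T"
    and "reduced TYPE('a)"
  shows "(UNIV :: 'a set) = \<Union> {B. fg_K_subalgebra K iota B \<and> almost_archimedean B (T \<inter> B)}
    \<and> (\<forall>F. finite F \<longrightarrow>
         (\<exists>B. fg_K_subalgebra K iota B \<and> almost_archimedean B (T \<inter> B) \<and> F \<subseteq> B))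
    \<and> (\<forall>B1 B2. fg_K_subalgebra K iota B1 \<and> almost_archimedean B1 (T \<inter> B1)
            \<and> fg_K_subalgebra K iota B2 \<and> almost_archimedean B2 (T \<inter> B2) \<longrightarrow>
         (\<exists>B3. fg_K_subalgebra K iota B3 \<and> almost_archimedean B3 (T \<inter> B3)
               \<and> B1 \<subseteq> B3 \<and> B2 \<subseteq> B3))"
proof -
  have superset: "\<exists>B. fg_K_subalgebra K iota B \<and> almost_archimedean B (T \<inter> B) \<and> F \<subseteq> B"
    if "finite F" for F
    using almost_archimedean_fg_K_subalgebra_superset[OF assms(3-6) that] .
  note directed = directed_union_of_fg_K_subalgebras[of K iota "\<lambda>B. almost_archimedean B (T \<inter> B)",
      OF superset]
  show ?thesis
    using superset directed by blast
qed

end
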